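(* Let $(X,C)$ be a separable convexity space and let $B$ be the family of its half-spaces. If the Radon number of $(X,C)$ is $r$, then the VC dimension of $B$ and the Helly number of $B$ are both less than $r$.
   Context: A convexity space is a pair $(X,C)$ with $C\subseteq 2^X$ such that $\emptyset, X\in C$ and $C$ is closed under arbitrary intersections. The convex hull $conv(Y)$ is the intersection of all $c\in C$ containing $Y$. A half-space is a $b\in C$ with $X\setminus b\in C$. $(X,C)$ is separable if for every $c\in C$ and $x\in X\setminus c$ there is a half-space $b$ with $c\subseteq b$, $x\notin b$. $C$ Radon-shatters $Y$ if for every partition $Y=Y_1\sqcup Y_2$, $conv(Y_1)\cap conv(Y_2)=\emptyset$; the Radon number is the minimum $r$ such that no set of size $r$ is Radon-shattered. The Helly number of a family $B$ is the minimum $h$ such that every finite $B'\subseteq B$ with $\bigcap B'=\emptyset$ contains a subfamily of at most $h$ sets with empty intersection. The VC dimension of $B\subseteq 2^X$ is the supremum of $v$ such that some $Y\subseteq X$ with $|Y|=v$ satisfies: for every $Z\subseteq Y$ there is $b\in B$ with $b\cap Y=Z$. *)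

theory Defs
  imports Main "HOL-Library.Extended_Nat"
begin

definition convexity_space :: "'a set \<Rightarrow> 'a set set \<Rightarrow> bool" where
  "convexity_space X C \<longleftrightarrow> C \<subseteq> Pow X \<and> {} \<in> C \<and> X \<in> C \<and>
     (\<forall>S. S \<subseteq> C \<longrightarrow> X \<inter> \<Inter>S \<in> C)"

definition conv :: "'a set \<Rightarrow> 'a set set \<Rightarrow> 'a set \<Rightarrow> 'a set" where
  "conv X C Y = X \<inter> \<Inter>{c \<in> C. Y \<subseteq> c}"

definition half_spaces :: "'a set \<Rightarrow> 'a set set \<Rightarrow> 'a set set" where
  "half_spaces X C = {b \<in> C. X - b \<in> C}"

definition separable :: "'a set \<Rightarrow> 'a set set \<Rightarrow> bool" where
  "separable X C \<longleftrightarrow>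
     (\<forall>c\<in>C. \<forall>x\<in>X - c. \<exists>b\<in>half_spaces X C. c \<subseteq> b \<and> x \<notin> b)"

definition radon_shatters :: "'a set \<Rightarrow> 'a set set \<Rightarrow> 'a set \<Rightarrow> bool" where
  "radon_shatters X C Y \<longleftrightarrow>
     (\<forall>Y1 Y2. Y1 \<inter> Y2 = {} \<and> Y1 \<union> Y2 = Y \<longrightarrow> conv X C Y1 \<inter> conv X C Y2 = {})"

definition radon_number :: "'a set \<Rightarrow> 'a set set \<Rightarrow> enat" where
  "radon_number X C =
    (let P = (\<lambda>r::nat. \<forall>Y. Y \<subseteq> X \<and> finite Y \<and> card Y = r \<longrightarrow> \<not> radon_shatters X C Y)
     in if \<exists>r. P r then enat (LEAST r. P r) else \<infinity>)"

text \<open>Helly number of a family B of subsets of the ground set X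
  (intersections are taken inside X, so the empty subfamily has intersection X).\<close>
definition helly_number :: "'a set \<Rightarrow> 'a set set \<Rightarrow> enat" where
  "helly_number X B =
    (let P = (\<lambda>h::nat. \<forall>B'. B' \<subseteq> B \<and> finite B' \<and> X \<inter> \<Inter>B' = {} \<longrightarrow>
                 (\<exists>B''\<subseteq>B'. card B'' \<le> h \<and> X \<inter> \<Inter>B'' = {}))
     in if \<exists>h. P h then enat (LEAST h. P h) else \<infinity>)"

definition vc_shatters :: "'a set set \<Rightarrow> 'a set \<Rightarrow> bool" where
  "vc_shatters B Y \<longleftrightarrow> (\<forall>Z\<subseteq>Y. \<exists>b\<in>B. b \<inter> Y = Z)"

definition vc_dim :: "'a set \<Rightarrow> 'a set set \<Rightarrow> enat" where
  "vc_dim X B = Sup {enat (card Y) | Y. Y \<subseteq> X \<and> finite Y \<and> vc_shatters B Y}"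

end

theory Submission
  imports Defs
begin

text \<open>Both bounds come from exhibiting Radon-shattered sets. A set that half-spaces
  VC-shatter is Radon-shattered: the half-space cutting out one part of a partition and
  its complement are disjoint convex sets containing the two parts. For Helly, take a
  minimal family of convex sets with empty intersection and pick for each member a point
  lying in all the other members. These points are distinct, and each part of a partition
  of them lies in every member picked for the other part, so the hulls of the two parts
  can only meet in the intersection of the whole family, which is empty.\<close>

lemma conv_mono: "Y \<subseteq> Z \<Longrightarrow> conv X C Y \<subseteq> conv X C Z"
  unfolding conv_def by blast

lemma conv_subset_Inter: "S \<subseteq> C \<Longrightarrow> Y \<subseteq> \<Inter>S \<Longrightarrow> conv X C Y \<subseteq> X \<inter> \<Inter>S"
  unfolding conv_def by blast

lemma radon_shattersI:
  assumes "\<And>Y1 Y2. Y1 \<inter> Y2 = {} \<Longrightarrow> Y1 \<union> Y2 = Y \<Longrightarrow>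
      \<exists>S1 S2. S1 \<subseteq> C \<and> S2 \<subseteq> C \<and> Y1 \<subseteq> \<Inter>S1 \<and> Y2 \<subseteq> \<Inter>S2 \<and> X \<inter> \<Inter>S1 \<inter> \<Inter>S2 = {}"
  shows "radon_shatters X C Y"
  unfolding radon_shatters_def
proof (intro allI impI)
  fix Y1 Y2 assume "Y1 \<inter> Y2 = {} \<and> Y1 \<union> Y2 = Y"
  then obtain S1 S2 where "S1 \<subseteq> C" "S2 \<subseteq> C" "Y1 \<subseteq> \<Inter>S1" "Y2 \<subseteq> \<Inter>S2"
      and disj: "X \<inter> \<Inter>S1 \<inter> \<Inter>S2 = {}"
    using assms[of Y1 Y2] by blast
  then have "conv X C Y1 \<subseteq> X \<inter> \<Inter>S1" "conv X C Y2 \<subseteq> X \<inter> \<Inter>S2"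
    by (metis conv_subset_Inter)+
  with disj show "conv X C Y1 \<inter> conv X C Y2 = {}" by blast
qed

lemma radon_shattersD:
  "radon_shatters X C Y \<Longrightarrow> Y1 \<inter> Y2 = {} \<Longrightarrow> Y1 \<union> Y2 = Y \<Longrightarrow> conv X C Y1 \<inter> conv X C Y2 = {}"
  unfolding radon_shatters_def by simp

lemma radon_shatters_empty: "{} \<in> C \<Longrightarrow> radon_shatters X C {}"
  unfolding radon_shatters_def conv_def by blast

lemma radon_shatters_subset:
  assumes "radon_shatters X C Y" "Y' \<subseteq> Y"
  shows "radon_shatters X C Y'"
  unfolding radon_shatters_def
proof (intro allI impI)
  fix Y1 Y2 assume "Y1 \<inter> Y2 = {} \<and> Y1 \<union> Y2 = Y'"
  with assms(2) have "conv X C Y1 \<inter> conv X C (Y2 \<union> (Y - Y')) = {}"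
    by (intro radon_shattersD[OF assms(1)]) auto
  moreover have "conv X C Y2 \<subseteq> conv X C (Y2 \<union> (Y - Y'))" by (rule conv_mono) blast
  ultimately show "conv X C Y1 \<inter> conv X C Y2 = {}" by blast
qed

lemma radon_shatters_card_less:
  assumes "radon_number X C = enat r" "Y \<subseteq> X" "finite Y" "radon_shatters X C Y"
  shows "card Y < r"
proof (rule ccontr)
  define P where "P = (\<lambda>r::nat. \<forall>Y. Y \<subseteq> X \<and> finite Y \<and> card Y = r \<longrightarrow> \<not> radon_shatters X C Y)"
  have "\<exists>r. P r" and "r = (LEAST r. P r)"
    using assms(1) unfolding radon_number_def P_def Let_def by (auto split: if_splits)
  then have "P r" by (metis LeastI_ex)
  assume "\<not> card Y < r"
  then obtain Y' where "Y' \<subseteq> Y" "card Y' = r"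
    using obtain_subset_with_card_n[of r Y] by auto
  moreover from this have "radon_shatters X C Y'"
    using assms(4) radon_shatters_subset by blast
  moreover have "Y' \<subseteq> X" "finite Y'"
    using \<open>Y' \<subseteq> Y\<close> assms(2,3) finite_subset by auto
  ultimately show False using \<open>P r\<close> unfolding P_def by blast
qed

lemma radon_number_pos:
  assumes "{} \<in> C" "radon_number X C = enat r"
  shows "0 < r"
  using radon_shatters_card_less[OF assms(2) empty_subsetI finite.emptyI radon_shatters_empty[OF assms(1)]]
  by simp

lemma vc_dim_less:
  assumes "0 < r"
    and "\<And>Y. Y \<subseteq> X \<Longrightarrow> finite Y \<Longrightarrow> vc_shatters B Y \<Longrightarrow> card Y < r"
  shows "vc_dim X B < enat r"
proof -
  have "vc_dim X B \<le> enat (r - 1)"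
    unfolding vc_dim_def
  proof (rule Sup_least)
    fix e assume "e \<in> {enat (card Y) | Y. Y \<subseteq> X \<and> finite Y \<and> vc_shatters B Y}"
    then obtain Y where "e = enat (card Y)" "Y \<subseteq> X" "finite Y" "vc_shatters B Y" by blast
    moreover from \<open>Y \<subseteq> X\<close> \<open>finite Y\<close> \<open>vc_shatters B Y\<close> have "card Y < r" by (rule assms(2))
    ultimately show "e \<le> enat (r - 1)" by simp
  qed
  also have "\<dots> < enat r" using assms(1) by simp
  finally show ?thesis .
qed

lemma helly_number_less:
  assumes "0 < r"
    and "\<And>B'. B' \<subseteq> B \<Longrightarrow> finite B' \<Longrightarrow> X \<inter> \<Inter>B' = {} \<Longrightarrow>
           \<exists>B''\<subseteq>B'. card B'' < r \<and> X \<inter> \<Inter>B'' = {}"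
  shows "helly_number X B < enat r"
proof -
  define P where "P = (\<lambda>h::nat. \<forall>B'. B' \<subseteq> B \<and> finite B' \<and> X \<inter> \<Inter>B' = {} \<longrightarrow>
                 (\<exists>B''\<subseteq>B'. card B'' \<le> h \<and> X \<inter> \<Inter>B'' = {}))"
  have "P (r - 1)"
    unfolding P_def
  proof (intro allI impI)
    fix B' assume "B' \<subseteq> B \<and> finite B' \<and> X \<inter> \<Inter>B' = {}"
    then obtain B'' where "B'' \<subseteq> B'" and "card B'' < r" and "X \<inter> \<Inter>B'' = {}"
      using assms(2)[of B'] by blast
    moreover from \<open>card B'' < r\<close> have "card B'' \<le> r - 1" by simp
    ultimately show "\<exists>B''\<subseteq>B'. card B'' \<le> r - 1 \<and> X \<inter> \<Inter>B'' = {}" by blast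
  qed
  then have "(LEAST h. P h) \<le> r - 1" by (rule Least_le)
  moreover have "helly_number X B = (if Ex P then enat (Least P) else \<infinity>)"
    unfolding helly_number_def Let_def P_def ..
  ultimately show ?thesis using assms(1) \<open>P (r - 1)\<close> by auto
qed

lemma vc_shatters_half_spaces_imp_radon_shatters:
  assumes "Y \<subseteq> X" "vc_shatters (half_spaces X C) Y"
  shows "radon_shatters X C Y"
proof (rule radon_shattersI)
  fix Y1 Y2 assume "Y1 \<inter> Y2 = {}" "Y1 \<union> Y2 = Y"
  then obtain b where "b \<in> C" "X - b \<in> C" "b \<inter> Y = Y1"
    using assms(2) unfolding vc_shatters_def half_spaces_def by blast
  with \<open>Y1 \<inter> Y2 = {}\<close> \<open>Y1 \<union> Y2 = Y\<close> assms(1)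
  show "\<exists>S1 S2. S1 \<subseteq> C \<and> S2 \<subseteq> C \<and> Y1 \<subseteq> \<Inter>S1 \<and> Y2 \<subseteq> \<Inter>S2 \<and> X \<inter> \<Inter>S1 \<inter> \<Inter>S2 = {}"
    by (intro exI[of _ "{b}"] exI[of _ "{X - b}"]) auto
qed

lemma obtain_minimal_subfamily_with_empty_Inter:
  assumes "finite B" "X \<inter> \<Inter>B = {}"
  obtains B' where "B' \<subseteq> B" "X \<inter> \<Inter>B' = {}" "\<And>B''. B'' \<subset> B' \<Longrightarrow> X \<inter> \<Inter>B'' \<noteq> {}"
proof -
  define Q where "Q = (\<lambda>n. \<exists>B'\<subseteq>B. card B' = n \<and> X \<inter> \<Inter>B' = {})"
  have "Q (card B)" unfolding Q_def using assms by blast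
  then have "Q (LEAST n. Q n)" by (rule LeastI)
  then obtain B' where B': "B' \<subseteq> B" "card B' = (LEAST n. Q n)" "X \<inter> \<Inter>B' = {}"
    unfolding Q_def by blast
  have "X \<inter> \<Inter>B'' \<noteq> {}" if "B'' \<subset> B'" for B''
  proof
    assume "X \<inter> \<Inter>B'' = {}"
    with that B'(1) have "Q (card B'')" unfolding Q_def by blast
    moreover have "card B'' < card B'"
      using psubset_card_mono[OF finite_subset[OF B'(1) assms(1)] that] .
    ultimately show False using B'(2) not_less_Least by metis
  qed
  with B'(1,3) show thesis by (rule that)
qed

lemma minimal_family_with_empty_Inter_radon_shatters:
  assumes "B \<subseteq> C" "finite B" "X \<inter> \<Inter>B = {}"
    and minimal: "\<And>B'. B' \<subset> B \<Longrightarrow> X \<inter> \<Inter>B' \<noteq> {}"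
  obtains Y where "Y \<subseteq> X" "finite Y" "card Y = card B" "radon_shatters X C Y"
proof -
  have "\<forall>b\<in>B. \<exists>y. y \<in> X \<inter> \<Inter>(B - {b})"
    using minimal by blast
  then obtain x where x: "\<And>b. b \<in> B \<Longrightarrow> x b \<in> X \<inter> \<Inter>(B - {b})" by metis
  have x_notin: "x b \<notin> b" if "b \<in> B" for b
    using x[OF that] assms(3) that by blast
  have x_in: "x b \<in> c" if "b \<in> B" "c \<in> B" "b \<noteq> c" for b c
    using x[OF that(1)] that by blast
  have "inj_on x B"
    by (rule inj_onI) (metis x_notin x_in)
  then have "card (x ` B) = card B" by (rule card_image)
  moreover have "x ` B \<subseteq> X" using x by blast
  moreover have "radon_shatters X C (x ` B)"
  proof (rule radon_shattersI)
    have points_in_others: "Z \<subseteq> \<Inter>{c\<in>B. x c \<notin> Z}" if "Z \<subseteq> x ` B" for Z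
    proof
      fix y assume "y \<in> Z"
      with that obtain b where "b \<in> B" "y = x b" by blast
      with \<open>y \<in> Z\<close> show "y \<in> \<Inter>{c\<in>B. x c \<notin> Z}" using x_in by blast
    qed
    fix Y1 Y2 assume "Y1 \<inter> Y2 = {}" "Y1 \<union> Y2 = x ` B"
    define S1 where "S1 = {c\<in>B. x c \<notin> Y1}"
    define S2 where "S2 = {c\<in>B. x c \<notin> Y2}"
    have "Y1 \<subseteq> x ` B" "Y2 \<subseteq> x ` B" using \<open>Y1 \<union> Y2 = x ` B\<close> by blast+
    then have "Y1 \<subseteq> \<Inter>S1" "Y2 \<subseteq> \<Inter>S2"
      unfolding S1_def S2_def by (simp_all only: points_in_others)
    moreover have "S1 \<subseteq> C" "S2 \<subseteq> C" using assms(1) unfolding S1_def S2_def by blast+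
    moreover have "S1 \<union> S2 = B" using \<open>Y1 \<inter> Y2 = {}\<close> unfolding S1_def S2_def by blast
    then have "X \<inter> \<Inter>S1 \<inter> \<Inter>S2 = {}" using assms(3) by (metis Inter_Un_distrib Int_assoc)
    ultimately show "\<exists>S1 S2. S1 \<subseteq> C \<and> S2 \<subseteq> C \<and> Y1 \<subseteq> \<Inter>S1 \<and> Y2 \<subseteq> \<Inter>S2 \<and> X \<inter> \<Inter>S1 \<inter> \<Inter>S2 = {}"
      by blast
  qed
  ultimately show thesis using that assms(2) by blast
qed

lemma vc_dim_half_spaces_less_radon_number:
  assumes "{} \<in> C" "radon_number X C = enat r"
  shows "vc_dim X (half_spaces X C) < enat r"
  using radon_number_pos[OF assms] by (rule vc_dim_less)
    (simp add: radon_shatters_card_less[OF assms(2)] vc_shatters_half_spaces_imp_radon_shatters)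

lemma helly_number_less_radon_number:
  assumes "{} \<in> C" "radon_number X C = enat r" "B \<subseteq> C"
  shows "helly_number X B < enat r"
  using radon_number_pos[OF assms(1,2)]
proof (rule helly_number_less)
  fix B' assume "B' \<subseteq> B" "finite B'" "X \<inter> \<Inter>B' = {}"
  obtain B'' where B'': "B'' \<subseteq> B'" "X \<inter> \<Inter>B'' = {}" "\<And>D. D \<subset> B'' \<Longrightarrow> X \<inter> \<Inter>D \<noteq> {}"
    using obtain_minimal_subfamily_with_empty_Inter[OF \<open>finite B'\<close> \<open>X \<inter> \<Inter>B' = {}\<close>] by metis
  have "B'' \<subseteq> C" using B''(1) \<open>B' \<subseteq> B\<close> assms(3) by blast
  moreover have "finite B''" using B''(1) \<open>finite B'\<close> by (rule finite_subset)
  ultimately obtain Y where "Y \<subseteq> X" "finite Y" "card Y = card B''" "radon_shatters X C Y"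
    using B''(2,3) by (rule minimal_family_with_empty_Inter_radon_shatters)
  then have "card B'' < r" using radon_shatters_card_less[OF assms(2)] by metis
  with B''(1,2) show "\<exists>B''\<subseteq>B'. card B'' < r \<and> X \<inter> \<Inter>B'' = {}" by blast
qed

theorem lemma1:
  fixes X :: "'a set" and C :: "'a set set" and r :: nat
  assumes "convexity_space X C"
    and "separable X C"
    and "radon_number X C = enat r"
  shows "vc_dim X (half_spaces X C) < enat r \<and> helly_number X (half_spaces X C) < enat r"
proof -
  have "{} \<in> C" using assms(1) unfolding convexity_space_def by blast
  moreover have "half_spaces X C \<subseteq> C" unfolding half_spaces_def by blast
  ultimately show ?thesis
    by (simp add: vc_dim_half_spaces_less_radon_number helly_number_less_radon_number assms(3))
qed

end
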